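(* Let $\mathcal{X},\mathcal{Y}$ be finite. For a distribution $Q$ on $\mathcal{X}$ and a false channel $\tilde W$, the false mutual information $\tilde I(Q,\tilde W)$ is: (1) non-negative; (2) concave in $Q$ (for fixed $\tilde W$); (3) convex in $\tilde W$ (for fixed $Q$); (4) bounded above by $\sigma\log|\mathcal{X}|$, where $\sigma=\max_x\sum_y\tilde W(y|x)$.
   Context: A false channel (false conditional probability) is any non-negative function $\tilde W(y|x)$ on $\mathcal{X}\times\mathcal{Y}$ (not necessarily summing to $1$ over $y$). The false mutual information is $$\tilde I(Q,\tilde W)=\sum_{x,y}Q(x)\tilde W(y|x)\log\frac{\tilde W(y|x)}{\sum_{x'}Q(x')\tilde W(y|x')},$$ where terms with $Q(x)\tilde W(y|x)=0$ are taken to be $0$ (convention $0\log0=0$). *)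

theory Defs
  imports Main "HOL.Transcendental"
begin

definition is_distr :: "('x::finite \<Rightarrow> real) \<Rightarrow> bool" where
  "is_distr Q \<longleftrightarrow> (\<forall>x. 0 \<le> Q x) \<and> (\<Sum>x\<in>UNIV. Q x) = 1"

text \<open>A false channel: any non-negative function; W x y stands for W(y|x).\<close>
definition false_channel :: "('x \<Rightarrow> 'y \<Rightarrow> real) \<Rightarrow> bool" where
  "false_channel W \<longleftrightarrow> (\<forall>x y. 0 \<le> W x y)"

definition false_mi :: "('x::finite \<Rightarrow> real) \<Rightarrow> ('x \<Rightarrow> 'y::finite \<Rightarrow> real) \<Rightarrow> real" where
  "false_mi Q W = (\<Sum>x\<in>UNIV. \<Sum>y\<in>UNIV.
      (if Q x * W x y = 0 then 0
       else Q x * W x y * ln (W x y / (\<Sum>x'\<in>UNIV. Q x' * W x' y))))"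

definition fc_sigma :: "('x::finite \<Rightarrow> 'y::finite \<Rightarrow> real) \<Rightarrow> real" where
  "fc_sigma W = Max (range (\<lambda>x. \<Sum>y\<in>UNIV. W x y))"

end

theory Submission
  imports Defs
begin

(* The four properties of the false mutual information all follow from the
   log-sum inequality for the summand  kl_term a b = a ln (a/b)  of a relative
   entropy.  Writing P(y) = sum_x Q(x) W(y|x) for the false output distribution,
     false_mi Q W = sum_x sum_y kl_term (Q x * W x y) (Q x * P y).
   (1) Non-negativity: for each y, log-sum over x bounds the inner sum below by
       kl_term (P y) (P y) = 0, because Q sums to 1.
   (3) Convexity in W: both arguments of kl_term are linear in W, and kl_term is
       jointly convex (log-sum with two summands).
   (2) Concavity in Q: false_mi Q W is a linear function of Q minus
       sum_y kl_term (P y) 1, and p |-> p ln p is convex while P is linear in Q.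
   (4) Upper bound: each summand is at most -Q x ln (Q x) * W(y|x), which leads
       to sigma * H(Q), and the entropy H(Q) is at most ln |X| by log-sum again. *)

section \<open>The relative-entropy summand and the log-sum inequality\<close>

text \<open>One summand a ln(a/b) of a relative entropy; since ln 0 = 0 in HOL, it
  vanishes for a = 0, matching the convention 0 log 0 = 0.\<close>
definition kl_term :: "real \<Rightarrow> real \<Rightarrow> real" where
  "kl_term a b = a * ln (a / b)"

lemma kl_term_zero [simp]: "kl_term 0 b = 0"
  by (simp add: kl_term_def)

lemma kl_term_scale: "kl_term (c * a) (c * b) = c * kl_term a b"
  by (cases "c = 0") (simp_all add: kl_term_def)

lemma kl_term_self [simp]: "kl_term a a = 0"
  by (cases "a = 0") (simp_all add: kl_term_def)

lemma kl_term_nonpos: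
  assumes "0 \<le> a" "a \<le> b"
  shows "kl_term a b \<le> 0"
proof (cases "a = 0")
  case False
  then have "0 < a" "0 < b" using assms by linarith+
  then have "ln (a / b) \<le> 0" using assms by simp
  then show ?thesis using assms by (simp add: kl_term_def mult_nonneg_nonpos)
qed simp

text \<open>Tangent-line bound: ln x \<le> x - 1 at x = b c / a.  Summed over i with
  c = \<Sum>a / \<Sum>b it yields the log-sum inequality.\<close>
lemma kl_term_tangent_bound:
  fixes a b c :: real
  assumes "0 \<le> a" "0 \<le> b" "0 < a \<longrightarrow> 0 < b" "0 < c"
  shows "a * ln c + a - b * c \<le> kl_term a b"
proof (cases "a = 0")
  case True
  then show ?thesis using assms by simp
next
  case False
  then have a: "0 < a" and b: "0 < b" using assms by auto
  have "ln (b * c / a) \<le> b * c / a - 1"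
    using a b assms by (intro ln_le_minus_one) simp
  moreover have "ln (b * c / a) = ln c - ln (a / b)"
    using a b assms by (simp add: ln_div ln_mult)
  ultimately have "a * (ln c - ln (a / b)) \<le> a * (b * c / a - 1)"
    using a by (simp add: mult_left_mono)
  then show ?thesis using a by (simp add: kl_term_def algebra_simps)
qed

lemma log_sum_inequality:
  fixes a b :: "'i \<Rightarrow> real"
  assumes fin: "finite I" and a: "\<forall>i\<in>I. 0 \<le> a i" and b: "\<forall>i\<in>I. 0 \<le> b i"
    and ab: "\<forall>i\<in>I. 0 < a i \<longrightarrow> 0 < b i"
  shows "kl_term (sum a I) (sum b I) \<le> (\<Sum>i\<in>I. kl_term (a i) (b i))"
proof (cases "sum a I = 0")
  case True
  then have "\<forall>i\<in>I. a i = 0" using sum_nonneg_eq_0_iff[OF fin] a by blast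
  then show ?thesis using True by simp
next
  case False
  then obtain i where i: "i \<in> I" "0 < a i" using a by (metis less_eq_real_def sum.neutral)
  then have "0 < b i" using ab by blast
  moreover have "b i \<le> sum b I" using member_le_sum[OF i(1)] b fin by blast
  ultimately have B: "0 < sum b I" by linarith
  have A: "0 < sum a I" using False a sum_nonneg[of I a] by force
  define c where "c = sum a I / sum b I"
  have c: "0 < c" using A B by (simp add: c_def)
  have "sum a I * ln c + sum a I - sum b I * c = (\<Sum>i\<in>I. a i * ln c + a i - b i * c)"
    by (simp add: sum.distrib sum_subtractf sum_distrib_right)
  also have "\<dots> \<le> (\<Sum>i\<in>I. kl_term (a i) (b i))"
    using kl_term_tangent_bound a b ab c by (intro sum_mono) blast
  finally show ?thesis using B by (simp add: c_def kl_term_def)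
qed

text \<open>Joint convexity of kl_term: the two-summand case of the log-sum inequality
  combined with scaling.\<close>
lemma kl_term_convex:
  fixes t a1 a2 b1 b2 :: real
  assumes t: "0 \<le> t" "t \<le> 1"
    and a: "0 \<le> a1" "0 \<le> a2" and b: "0 \<le> b1" "0 \<le> b2"
    and ab: "0 < a1 \<longrightarrow> 0 < b1" "0 < a2 \<longrightarrow> 0 < b2"
  shows "kl_term (t * a1 + (1 - t) * a2) (t * b1 + (1 - t) * b2)
           \<le> t * kl_term a1 b1 + (1 - t) * kl_term a2 b2"
proof -
  define s where "s i = (if i then t else 1 - t)" for i :: bool
  define a' where "a' i = s i * (if i then a1 else a2)" for i
  define b' where "b' i = s i * (if i then b1 else b2)" for i
  have s: "0 \<le> s i" for i using t by (simp add: s_def)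
  have "kl_term (sum a' UNIV) (sum b' UNIV) \<le> (\<Sum>i\<in>UNIV. kl_term (a' i) (b' i))"
  proof (rule log_sum_inequality)
    show "\<forall>i\<in>UNIV. 0 < a' i \<longrightarrow> 0 < b' i"
      using s a b ab by (auto simp: a'_def b'_def zero_less_mult_iff)
  qed (use s a b in \<open>auto simp: a'_def b'_def\<close>)
  then show ?thesis
    by (simp add: UNIV_bool a'_def b'_def s_def kl_term_scale add.commute)
qed

lemma kl_term_convex_one:
  assumes "0 \<le> t" "t \<le> 1" "0 \<le> p1" "0 \<le> p2"
  shows "kl_term (t * p1 + (1 - t) * p2) 1 \<le> t * kl_term p1 1 + (1 - t) * kl_term p2 1"
  using kl_term_convex[OF assms(1,2,3,4), of 1 1] by simp

section \<open>The false output distribution and representations of false_mi\<close>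

definition fc_output :: "('x::finite \<Rightarrow> real) \<Rightarrow> ('x \<Rightarrow> 'y \<Rightarrow> real) \<Rightarrow> 'y \<Rightarrow> real" where
  "fc_output Q W y = (\<Sum>x\<in>UNIV. Q x * W x y)"

lemma is_distrD:
  assumes "is_distr Q"
  shows "0 \<le> Q x" "(\<Sum>x\<in>UNIV. Q x) = 1"
  using assms by (auto simp: is_distr_def)

lemma false_channelD: "false_channel W \<Longrightarrow> 0 \<le> W x y"
  by (simp add: false_channel_def)

lemma fc_output_nonneg:
  assumes "\<And>x. 0 \<le> Q x" "\<And>x y. 0 \<le> W x y"
  shows "0 \<le> fc_output Q W y"
  unfolding fc_output_def using assms by (intro sum_nonneg) simp

lemma joint_le_fc_output:
  assumes "\<And>x. 0 \<le> Q x" "\<And>x y. 0 \<le> W x y"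
  shows "Q x * W x y \<le> fc_output Q W y"
  unfolding fc_output_def using assms by (intro member_le_sum) simp_all

text \<open>Domination hypothesis of the log-sum inequality for the pair
  (Q(x) W(y|x), Q(x) P(y)).\<close>
lemma joint_dominated:
  assumes "\<And>x. 0 \<le> Q x" "\<And>x y. 0 \<le> W x y" "0 < Q x * W x y"
  shows "0 < Q x * fc_output Q W y"
proof -
  have "0 < Q x" using assms(1,2,3) by (metis less_eq_real_def mult_zero_left)
  moreover have "0 < fc_output Q W y"
    using joint_le_fc_output[of Q W x y, OF assms(1,2)] assms(3) by linarith
  ultimately show ?thesis by simp
qed

text \<open>The guard Q(x) W(y|x) = 0 in the definition is absorbed by kl_term.\<close>
lemma false_mi_kl_form:
  "false_mi Q W = (\<Sum>x\<in>UNIV. \<Sum>y\<in>UNIV. Q x * kl_term (W x y) (fc_output Q W y))"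
  unfolding false_mi_def fc_output_def kl_term_def by (intro sum.cong refl) auto

lemma false_mi_joint_form:
  "false_mi Q W = (\<Sum>x\<in>UNIV. \<Sum>y\<in>UNIV. kl_term (Q x * W x y) (Q x * fc_output Q W y))"
  unfolding false_mi_kl_form kl_term_scale ..

text \<open>Splitting ln(W/P) = ln W - ln P: false_mi is a Q-linear term minus
  \<Sum>y P(y) ln P(y).\<close>
lemma false_mi_split:
  assumes Q: "\<And>x. 0 \<le> Q x" and W: "\<And>x y. 0 \<le> W x y"
  shows "false_mi Q W = (\<Sum>x\<in>UNIV. Q x * (\<Sum>y\<in>UNIV. kl_term (W x y) 1))
      - (\<Sum>y\<in>UNIV. kl_term (fc_output Q W y) 1)"
proof -
  let ?P = "fc_output Q W"
  have summand: "Q x * kl_term (W x y) (?P y) = Q x * kl_term (W x y) 1 - Q x * W x y * ln (?P y)"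
    for x y
  proof (cases "Q x * W x y = 0")
    case False
    then have "0 < Q x * W x y" using Q W by (simp add: order_less_le)
    then have "0 < ?P y" using joint_le_fc_output[of Q W x y, OF Q W] by linarith
    moreover have "0 < W x y" using Q W False by (auto simp: order_less_le)
    ultimately show ?thesis by (simp add: kl_term_def ln_div algebra_simps)
  qed (auto simp: kl_term_def)
  have "(\<Sum>x\<in>UNIV. \<Sum>y\<in>UNIV. Q x * W x y * ln (?P y)) = (\<Sum>y\<in>UNIV. kl_term (?P y) 1)"
    unfolding fc_output_def kl_term_def by (subst sum.swap) (simp add: sum_distrib_right)
  then show ?thesis
    unfolding false_mi_kl_form summand by (simp add: sum_subtractf sum_distrib_left)
qed

lemma fc_output_mix_input:
  "fc_output (\<lambda>x. t * Q1 x + (1 - t) * Q2 x) W y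
     = t * fc_output Q1 W y + (1 - t) * fc_output Q2 W y"
  unfolding fc_output_def sum_distrib_left sum.distrib[symmetric]
  by (rule sum.cong) (auto simp: algebra_simps)

lemma fc_output_mix_channel:
  "fc_output Q (\<lambda>x y. t * W1 x y + (1 - t) * W2 x y) y
     = t * fc_output Q W1 y + (1 - t) * fc_output Q W2 y"
  unfolding fc_output_def sum_distrib_left sum.distrib[symmetric]
  by (rule sum.cong) (auto simp: algebra_simps)

theorem false_mi_nonneg:
  assumes Q: "is_distr Q" and W: "false_channel W"
  shows "0 \<le> false_mi Q W"
proof -
  let ?P = "fc_output Q W"
  note Qn = is_distrD(1)[OF Q] and Wn = false_channelD[OF W]
  have "0 = (\<Sum>y\<in>UNIV. kl_term (?P y) (?P y))"
    by (simp add: kl_term_def)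
  also have "\<dots> \<le> (\<Sum>y\<in>UNIV. \<Sum>x\<in>UNIV. kl_term (Q x * W x y) (Q x * ?P y))"
  proof (rule sum_mono)
    fix y
    have "(\<Sum>x\<in>UNIV. Q x * ?P y) = ?P y"
      using is_distrD(2)[OF Q] by (simp flip: sum_distrib_right)
    moreover have "(\<Sum>x\<in>UNIV. Q x * W x y) = ?P y"
      by (simp add: fc_output_def)
    moreover have "kl_term (\<Sum>x\<in>UNIV. Q x * W x y) (\<Sum>x\<in>UNIV. Q x * ?P y)
        \<le> (\<Sum>x\<in>UNIV. kl_term (Q x * W x y) (Q x * ?P y))"
      using Qn Wn fc_output_nonneg[of Q W] joint_dominated[of Q W]
      by (intro log_sum_inequality) auto
    ultimately show "kl_term (?P y) (?P y) \<le> (\<Sum>x\<in>UNIV. kl_term (Q x * W x y) (Q x * ?P y))"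
      by simp
  qed
  also have "\<dots> = false_mi Q W"
    unfolding false_mi_joint_form by (rule sum.swap)
  finally show ?thesis .
qed

theorem false_mi_concave_input:
  assumes Q1: "is_distr Q1" and Q2: "is_distr Q2" and W: "false_channel W"
    and t: "0 \<le> t" "t \<le> 1"
  shows "t * false_mi Q1 W + (1 - t) * false_mi Q2 W
           \<le> false_mi (\<lambda>x. t * Q1 x + (1 - t) * Q2 x) W"
proof -
  define Q where "Q = (\<lambda>x. t * Q1 x + (1 - t) * Q2 x)"
  define c where "c x = (\<Sum>y\<in>UNIV. kl_term (W x y) 1)" for x
  define H where "H R = (\<Sum>y\<in>UNIV. kl_term (fc_output R W y) 1)" for R
  note Q1n = is_distrD(1)[OF Q1] and Q2n = is_distrD(1)[OF Q2]
    and Wn = false_channelD[OF W]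
  have Qn: "\<And>x. 0 \<le> Q x" using Q1n Q2n t by (simp add: Q_def)
  have linear: "(\<Sum>x\<in>UNIV. Q x * c x)
      = t * (\<Sum>x\<in>UNIV. Q1 x * c x) + (1 - t) * (\<Sum>x\<in>UNIV. Q2 x * c x)"
    unfolding Q_def sum_distrib_left sum.distrib[symmetric]
    by (rule sum.cong) (auto simp: algebra_simps)
  have "H Q \<le> (\<Sum>y\<in>UNIV. t * kl_term (fc_output Q1 W y) 1 + (1 - t) * kl_term (fc_output Q2 W y) 1)"
    unfolding H_def Q_def fc_output_mix_input
    using t fc_output_nonneg[of Q1 W] fc_output_nonneg[of Q2 W] Q1n Q2n Wn
    by (intro sum_mono kl_term_convex_one) auto
  also have "\<dots> = t * H Q1 + (1 - t) * H Q2"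
    by (simp add: H_def sum.distrib sum_distrib_left)
  finally have convex: "H Q \<le> t * H Q1 + (1 - t) * H Q2" .
  have split: "false_mi R W = (\<Sum>x\<in>UNIV. R x * c x) - H R" if "\<And>x. 0 \<le> R x" for R
    unfolding c_def H_def using false_mi_split[OF that Wn] .
  have "t * false_mi Q1 W + (1 - t) * false_mi Q2 W
      = (\<Sum>x\<in>UNIV. Q x * c x) - (t * H Q1 + (1 - t) * H Q2)"
    unfolding split[OF Q1n] split[OF Q2n] linear by (simp add: algebra_simps)
  moreover have "false_mi Q W = (\<Sum>x\<in>UNIV. Q x * c x) - H Q"
    by (rule split) (rule Qn)
  ultimately show ?thesis
    using convex unfolding Q_def[symmetric] by linarith
qed

theorem false_mi_convex_channel:
  assumes Q: "is_distr Q" and W1: "false_channel W1" and W2: "false_channel W2"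
    and t: "0 \<le> t" "t \<le> 1"
  shows "false_mi Q (\<lambda>x y. t * W1 x y + (1 - t) * W2 x y)
           \<le> t * false_mi Q W1 + (1 - t) * false_mi Q W2"
proof -
  note Qn = is_distrD(1)[OF Q] and W1n = false_channelD[OF W1] and W2n = false_channelD[OF W2]
  have summand: "kl_term (Q x * (t * W1 x y + (1 - t) * W2 x y))
        (Q x * (t * fc_output Q W1 y + (1 - t) * fc_output Q W2 y))
      \<le> t * kl_term (Q x * W1 x y) (Q x * fc_output Q W1 y)
        + (1 - t) * kl_term (Q x * W2 x y) (Q x * fc_output Q W2 y)" for x y
  proof -
    have "kl_term (t * (Q x * W1 x y) + (1 - t) * (Q x * W2 x y))
          (t * (Q x * fc_output Q W1 y) + (1 - t) * (Q x * fc_output Q W2 y))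
        \<le> t * kl_term (Q x * W1 x y) (Q x * fc_output Q W1 y)
          + (1 - t) * kl_term (Q x * W2 x y) (Q x * fc_output Q W2 y)"
      using t Qn W1n W2n fc_output_nonneg[of Q W1] fc_output_nonneg[of Q W2]
        joint_dominated[of Q W1] joint_dominated[of Q W2]
      by (intro kl_term_convex) auto
    then show ?thesis by (simp add: algebra_simps)
  qed
  have "false_mi Q (\<lambda>x y. t * W1 x y + (1 - t) * W2 x y)
      \<le> (\<Sum>x\<in>UNIV. \<Sum>y\<in>UNIV. t * kl_term (Q x * W1 x y) (Q x * fc_output Q W1 y)
          + (1 - t) * kl_term (Q x * W2 x y) (Q x * fc_output Q W2 y))"
    unfolding false_mi_joint_form fc_output_mix_channel by (intro sum_mono summand)
  also have "\<dots> = t * false_mi Q W1 + (1 - t) * false_mi Q W2"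
    unfolding false_mi_joint_form by (simp add: sum.distrib sum_distrib_left)
  finally show ?thesis .
qed

lemma is_distr_le_one:
  assumes "is_distr Q"
  shows "Q x \<le> 1"
  using member_le_sum[of x UNIV Q] is_distrD[OF assms] by simp

text \<open>The Shannon entropy -\<Sum>x Q(x) ln Q(x) of a distribution is at most
  ln |X|: log-sum against the uniform weights 1/|X|.\<close>
lemma entropy_le_ln_card:
  fixes Q :: "'x::finite \<Rightarrow> real"
  assumes Q: "is_distr Q"
  shows "- (\<Sum>x\<in>UNIV. Q x * ln (Q x)) \<le> ln (real (card (UNIV :: 'x set)))"
proof -
  define n where "n = real (card (UNIV :: 'x set))"
  have n: "0 < n" by (simp add: n_def finite_UNIV_card_ge_0)
  have uniform: "kl_term (Q x) (1 / n) = Q x * ln (Q x) + Q x * ln n" for x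
    using n by (simp add: kl_term_def ln_mult algebra_simps)
  have "kl_term (\<Sum>x\<in>UNIV. Q x) (\<Sum>x\<in>(UNIV::'x set). 1 / n) \<le> (\<Sum>x\<in>UNIV. kl_term (Q x) (1 / n))"
    using is_distrD(1)[OF Q] n by (intro log_sum_inequality) auto
  moreover have "(\<Sum>x\<in>(UNIV::'x set). 1 / n) = 1" by (simp add: n_def)
  ultimately have "0 \<le> (\<Sum>x\<in>UNIV. Q x * ln (Q x)) + ln n"
    using is_distrD(2)[OF Q] unfolding uniform
    by (simp add: sum.distrib flip: sum_distrib_right)
  then show ?thesis by (simp add: n_def)
qed

lemma summand_le_self_information:
  fixes q w p :: real
  assumes "0 \<le> q" "0 \<le> w" "q * w \<le> p"
  shows "q * kl_term w p \<le> - (q * ln q) * w"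
proof (cases "q * w = 0")
  case True
  then show ?thesis by auto
next
  case False
  then have q: "0 < q" and w: "0 < w" using assms by (auto simp: order_less_le)
  then have "0 < p" using assms(3) by (meson mult_pos_pos order_less_le_trans)
  then have "q * kl_term w p = kl_term (q * w) p - (q * ln q) * w"
    using q w by (simp add: kl_term_def ln_div ln_mult algebra_simps)
  moreover have "kl_term (q * w) p \<le> 0"
    using assms q w by (intro kl_term_nonpos) simp_all
  ultimately show ?thesis by (simp add: mult_minus_left)
qed

theorem false_mi_le_sigma_ln_card:
  fixes Q :: "'x::finite \<Rightarrow> real" and W :: "'x \<Rightarrow> 'y::finite \<Rightarrow> real"
  assumes Q: "is_distr Q" and W: "false_channel W"
  shows "false_mi Q W \<le> fc_sigma W * ln (real (card (UNIV :: 'x set)))"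
proof -
  note Qn = is_distrD(1)[OF Q] and Wn = false_channelD[OF W]
  define h where "h x = - (Q x * ln (Q x))" for x
  have h: "0 \<le> h x" for x
    using Qn[of x] is_distr_le_one[OF Q, of x]
    by (cases "Q x = 0") (simp_all add: h_def mult_nonneg_nonpos)
  have mass: "(\<Sum>y\<in>UNIV. W x y) \<le> fc_sigma W" for x
    unfolding fc_sigma_def by (rule Max_ge) auto
  have sigma: "0 \<le> fc_sigma W"
    using mass[of undefined] sum_nonneg[of UNIV "W undefined"] Wn by force
  have "false_mi Q W \<le> (\<Sum>x\<in>UNIV. \<Sum>y\<in>UNIV. h x * W x y)"
    unfolding false_mi_kl_form h_def
    by (intro sum_mono summand_le_self_information joint_le_fc_output Qn Wn)
  also have "\<dots> \<le> (\<Sum>x\<in>UNIV. h x * fc_sigma W)"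
    unfolding sum_distrib_left[symmetric] by (intro sum_mono mult_left_mono mass h)
  also have "\<dots> = fc_sigma W * (\<Sum>x\<in>UNIV. h x)"
    by (simp add: sum_distrib_left mult.commute)
  also have "\<dots> \<le> fc_sigma W * ln (real (card (UNIV :: 'x set)))"
    unfolding h_def sum_negf by (intro mult_left_mono entropy_le_ln_card Q sigma)
  finally show ?thesis .
qed

theorem lemma6:
  shows "(\<forall>(Q::'x::finite \<Rightarrow> real) (W::'x \<Rightarrow> 'y::finite \<Rightarrow> real).
            is_distr Q \<longrightarrow> false_channel W \<longrightarrow> 0 \<le> false_mi Q W)
       \<and> (\<forall>(Q1::'x \<Rightarrow> real) Q2 (W::'x \<Rightarrow> 'y \<Rightarrow> real) (t::real).
            is_distr Q1 \<longrightarrow> is_distr Q2 \<longrightarrow> false_channel W \<longrightarrow> 0 \<le> t \<longrightarrow> t \<le> 1 \<longrightarrow>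
            t * false_mi Q1 W + (1 - t) * false_mi Q2 W
              \<le> false_mi (\<lambda>x. t * Q1 x + (1 - t) * Q2 x) W)
       \<and> (\<forall>(Q::'x \<Rightarrow> real) (W1::'x \<Rightarrow> 'y \<Rightarrow> real) W2 (t::real).
            is_distr Q \<longrightarrow> false_channel W1 \<longrightarrow> false_channel W2 \<longrightarrow> 0 \<le> t \<longrightarrow> t \<le> 1 \<longrightarrow>
            false_mi Q (\<lambda>x y. t * W1 x y + (1 - t) * W2 x y)
              \<le> t * false_mi Q W1 + (1 - t) * false_mi Q W2)
       \<and> (\<forall>(Q::'x \<Rightarrow> real) (W::'x \<Rightarrow> 'y \<Rightarrow> real).
            is_distr Q \<longrightarrow> false_channel W \<longrightarrow>
            false_mi Q W \<le> fc_sigma W * ln (real (card (UNIV :: 'x set))))"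
  using false_mi_nonneg false_mi_concave_input false_mi_convex_channel
    false_mi_le_sigma_ln_card
  by blast

end
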